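(* Fix a monomial order on $S$. Let $J,E$ be ideals of $S$ and let $\mathcal G_J$ be a Gröbner basis of $J$. The following are equivalent: (a) $E$ is S-nice with respect to $\mathcal G_J$; (b) for every Gröbner basis $\mathcal G_E$ of $E$, and every $f\in\mathcal G_J$, $g\in\mathcal G_E$, one has $S(f,g)\in E$; (c) there exists a Gröbner basis $\mathcal G_E$ of $E$ such that $S(f,g)\in E$ for all $f\in\mathcal G_J$ and $g\in\mathcal G_E$.
   Context: $K$ is a field and $S=K[x_1,\ldots,x_n]$ with a fixed monomial order. For $0\neq f\in S$, $\mathrm{in}(f)$ denotes its leading monomial and $\mathrm{LT}(f)$ its leading term. For nonzero $f,g\in S$ the S-polynomial is $S(f,g)=\frac{\mathrm{lcm}(\mathrm{in}(f),\mathrm{in}(g))}{\mathrm{LT}(f)}f-\frac{\mathrm{lcm}(\mathrm{in}(f),\mathrm{in}(g))}{\mathrm{LT}(g)}g$. Given a Gröbner basis $\mathcal G_J$ of an ideal $J$, an ideal $E$ is called S-nice with respect to $\mathcal G_J$ if $S(f,g)\in E$ for all $f\in\mathcal G_J$ and all nonzero $g\in E$. *)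

theory Defs
  imports Main "HOL-Library.Poly_Mapping"
begin

(* Monomials in the variables of type 'v (a finite type, so S = K[x_1..x_n]
   with n = CARD('v)) are exponent vectors 'v \<Rightarrow>\<^sub>0 nat; polynomials are
   finitely supported maps from monomials to coefficients. *)
type_synonym 'v monom = "'v \<Rightarrow>\<^sub>0 nat"
type_synonym ('v, 'k) mpoly = "'v monom \<Rightarrow>\<^sub>0 'k"

definition monomial_order :: "('v monom \<Rightarrow> 'v monom \<Rightarrow> bool) \<Rightarrow> bool" where
  "monomial_order ord \<longleftrightarrow>
     (\<forall>a. ord a a) \<and>
     (\<forall>a b. ord a b \<and> ord b a \<longrightarrow> a = b) \<and>
     (\<forall>a b c. ord a b \<and> ord b c \<longrightarrow> ord a c) \<and>
     (\<forall>a b. ord a b \<or> ord b a) \<and>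
     (\<forall>a. ord 0 a) \<and>
     (\<forall>a b c. ord a b \<longrightarrow> ord (a + c) (b + c)) \<and>
     wf {(a, b). ord a b \<and> a \<noteq> b}"

definition mdvd :: "'v monom \<Rightarrow> 'v monom \<Rightarrow> bool" where
  "mdvd a b \<longleftrightarrow> (\<forall>v. Poly_Mapping.lookup a v \<le> Poly_Mapping.lookup b v)"

definition mlcm :: "'v monom \<Rightarrow> 'v monom \<Rightarrow> 'v monom" where
  "mlcm a b = Abs_poly_mapping (\<lambda>v. max (Poly_Mapping.lookup a v) (Poly_Mapping.lookup b v))"

(* leading monomial in(f) (meaningful for f \<noteq> 0) *)
definition lm :: "('v monom \<Rightarrow> 'v monom \<Rightarrow> bool) \<Rightarrow> ('v, 'k::zero) mpoly \<Rightarrow> 'v monom" where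
  "lm ord f = (THE m. m \<in> Poly_Mapping.keys f \<and> (\<forall>m'\<in>Poly_Mapping.keys f. ord m' m))"

definition lc :: "('v monom \<Rightarrow> 'v monom \<Rightarrow> bool) \<Rightarrow> ('v, 'k::zero) mpoly \<Rightarrow> 'k" where
  "lc ord f = Poly_Mapping.lookup f (lm ord f)"

definition lt :: "('v monom \<Rightarrow> 'v monom \<Rightarrow> bool) \<Rightarrow> ('v, 'k::zero) mpoly \<Rightarrow> ('v, 'k) mpoly" where
  "lt ord f = Poly_Mapping.single (lm ord f) (lc ord f)"

definition spoly :: "('v monom \<Rightarrow> 'v monom \<Rightarrow> bool) \<Rightarrow> ('v, 'k::field) mpoly \<Rightarrow> ('v, 'k) mpoly \<Rightarrow> ('v, 'k) mpoly" where
  "spoly ord f g =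
    (if f = 0 \<or> g = 0 then 0 else
     (let L = mlcm (lm ord f) (lm ord g) in
       Poly_Mapping.single (L - lm ord f) (inverse (lc ord f)) * f
       - Poly_Mapping.single (L - lm ord g) (inverse (lc ord g)) * g))"

definition is_ideal :: "'a::comm_ring_1 set \<Rightarrow> bool" where
  "is_ideal I \<longleftrightarrow> 0 \<in> I \<and> (\<forall>a\<in>I. \<forall>b\<in>I. a + b \<in> I) \<and> (\<forall>r. \<forall>a\<in>I. r * a \<in> I)"

(* G is a Groebner basis of the ideal J: a finite subset of J such that the
   leading monomials of G generate in(J), i.e. every leading monomial of a
   nonzero element of J is divisible by the leading monomial of some nonzero
   element of G. *)
definition groebner_basis :: "('v monom \<Rightarrow> 'v monom \<Rightarrow> bool) \<Rightarrow> ('v, 'k::zero) mpoly set \<Rightarrow> ('v, 'k) mpoly set \<Rightarrow> bool" where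
  "groebner_basis ord G J \<longleftrightarrow> finite G \<and> G \<subseteq> J \<and>
     (\<forall>f\<in>J. f \<noteq> 0 \<longrightarrow> (\<exists>g\<in>G. g \<noteq> 0 \<and> mdvd (lm ord g) (lm ord f)))"

definition S_nice :: "('v monom \<Rightarrow> 'v monom \<Rightarrow> bool) \<Rightarrow> ('v, 'k::field) mpoly set \<Rightarrow> ('v, 'k) mpoly set \<Rightarrow> bool" where
  "S_nice ord GJ E \<longleftrightarrow> (\<forall>f\<in>GJ. \<forall>g\<in>E. g \<noteq> 0 \<longrightarrow> spoly ord f g \<in> E)"

end

theory Submission
  imports Defs
begin

(* If in(g') divides in(g) with g, g' in E, then the f-part
   (L/LT(f)) f of S(f,g) is a monomial multiple of the f-part of S(f,g'),
   because lcm(in f, in g') divides lcm(in f, in g). As the g-parts of both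
   S-polynomials lie in E, S(f,g') in E forces S(f,g) in E; hence (c) implies
   (a). The implication (a) to (b) is immediate, and (b) to (c) needs only that
   every set of polynomials has a Groebner basis, which is Dickson's lemma.
   Neither the monomial order nor the ideal J plays any role. *)

lemma dickson_finite_basis:
  fixes h :: "'a \<Rightarrow> 'v \<Rightarrow> nat"
  assumes "finite V"
  shows "\<exists>F\<subseteq>M. finite F \<and> (\<forall>m\<in>M. \<exists>a\<in>F. \<forall>v\<in>V. h a v \<le> h m v)"
  using assms
proof (induction V arbitrary: M rule: finite_induct)
  case empty
  show ?case
  proof (cases "M = {}")
    case False
    then obtain a where "a \<in> M" by auto
    then show ?thesis by (intro exI[of _ "{a}"]) auto
  qed auto
next
  case (insert x V)
  obtain F0 where F0: "F0 \<subseteq> M" "finite F0" "\<forall>m\<in>M. \<exists>a\<in>F0. \<forall>v\<in>V. h a v \<le> h m v"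
    using insert.IH[of M] by blast
  have "\<forall>i. \<exists>F\<subseteq>{m\<in>M. h m x = i}. finite F \<and>
      (\<forall>m\<in>{m\<in>M. h m x = i}. \<exists>a\<in>F. \<forall>v\<in>V. h a v \<le> h m v)"
    by (intro allI insert.IH)
  from choice[OF this] obtain Fi where "\<forall>i. Fi i \<subseteq> {m\<in>M. h m x = i} \<and> finite (Fi i) \<and>
      (\<forall>m\<in>{m\<in>M. h m x = i}. \<exists>a\<in>Fi i. \<forall>v\<in>V. h a v \<le> h m v)"
    by (elim exE)
  then have Fi: "\<And>i. Fi i \<subseteq> {m\<in>M. h m x = i}" "\<And>i. finite (Fi i)"
    "\<And>i. \<forall>m\<in>{m\<in>M. h m x = i}. \<exists>a\<in>Fi i. \<forall>v\<in>V. h a v \<le> h m v"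
    by simp_all
  define k where "k = Max ((\<lambda>a. h a x) ` F0)"
  \<comment> \<open>F0 covers every m whose x-value is at least that of its F0-witness; all other m
      have x-value at most k and are covered by the basis of their fibre\<close>
  define F where "F = F0 \<union> (\<Union>i\<le>k. Fi i)"
  have "\<exists>a\<in>F. \<forall>v\<in>insert x V. h a v \<le> h m v" if m: "m \<in> M" for m
  proof -
    obtain a where a: "a \<in> F0" "\<forall>v\<in>V. h a v \<le> h m v"
      using F0 m by blast
    show ?thesis
    proof (cases "h a x \<le> h m x")
      case True
      then show ?thesis using a unfolding F_def by auto
    next
      case False
      have "h a x \<le> k" unfolding k_def using a F0 by auto
      with False have "h m x \<le> k" by simp
      moreover obtain b where b: "b \<in> Fi (h m x)" "\<forall>v\<in>V. h b v \<le> h m v"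
        using Fi(3) m by blast
      moreover have "h b x = h m x" using Fi(1) b(1) by blast
      ultimately show ?thesis unfolding F_def by (intro bexI[of _ b]) auto
    qed
  qed
  moreover have "F \<subseteq> M" using F0(1) Fi(1) unfolding F_def by blast
  moreover have "finite F" using F0(2) Fi(2) unfolding F_def by simp
  ultimately show ?case by blast
qed

lemma groebner_basis_exists:
  fixes E :: "('v::finite, 'k::zero) mpoly set"
  shows "\<exists>G. groebner_basis ord G E"
proof -
  obtain G where "G \<subseteq> E - {0}" "finite G"
    "\<forall>g\<in>E - {0}. \<exists>a\<in>G. \<forall>v\<in>UNIV.
      Poly_Mapping.lookup (lm ord a) v \<le> Poly_Mapping.lookup (lm ord g) v"
    using dickson_finite_basis[of UNIV "E - {0}" "\<lambda>g. Poly_Mapping.lookup (lm ord g)"] by auto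
  then have "groebner_basis ord G E"
    unfolding groebner_basis_def mdvd_def by blast
  then show ?thesis ..
qed

lemma ideal_zero: "is_ideal I \<Longrightarrow> 0 \<in> I"
  unfolding is_ideal_def by blast

lemma ideal_add: "is_ideal I \<Longrightarrow> a \<in> I \<Longrightarrow> b \<in> I \<Longrightarrow> a + b \<in> I"
  unfolding is_ideal_def by blast

lemma ideal_mult_left: "is_ideal I \<Longrightarrow> a \<in> I \<Longrightarrow> r * a \<in> I"
  unfolding is_ideal_def by blast

lemma ideal_diff: "is_ideal I \<Longrightarrow> a \<in> I \<Longrightarrow> b \<in> I \<Longrightarrow> a - b \<in> I"
  using ideal_add[of I a "(- 1) * b"] ideal_mult_left[of I b "- 1"] by simp

lemma ideal_diff_iff: "is_ideal I \<Longrightarrow> b \<in> I \<Longrightarrow> a - b \<in> I \<longleftrightarrow> a \<in> I"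
  using ideal_add[of I "a - b" b] ideal_diff[of I a b] by auto

lemma lookup_mlcm:
  "Poly_Mapping.lookup (mlcm a b) v = max (Poly_Mapping.lookup a v) (Poly_Mapping.lookup b v)"
proof -
  have "finite {v. max (Poly_Mapping.lookup a v) (Poly_Mapping.lookup b v) \<noteq> 0}"
    by (rule finite_subset[of _ "Poly_Mapping.keys a \<union> Poly_Mapping.keys b"])
      (auto simp: max_def Poly_Mapping.in_keys_iff)
  then show ?thesis unfolding mlcm_def by (simp add: lookup_Abs_poly_mapping)
qed

lemma mlcm_minus_add_mlcm_minus:
  assumes "mdvd b b'"
  shows "(mlcm a b' - mlcm a b) + (mlcm a b - a) = mlcm a b' - a"
proof (rule poly_mapping_eqI)
  fix v
  have "Poly_Mapping.lookup b v \<le> Poly_Mapping.lookup b' v" using assms unfolding mdvd_def by blast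
  then show "Poly_Mapping.lookup (mlcm a b' - mlcm a b + (mlcm a b - a)) v =
      Poly_Mapping.lookup (mlcm a b' - a) v"
    by (simp add: lookup_add lookup_minus lookup_mlcm)
qed

lemma spoly_zero_left [simp]: "spoly ord 0 g = 0"
  and spoly_zero_right [simp]: "spoly ord f 0 = 0"
  unfolding spoly_def by simp_all

lemma spoly_mem_ideal_iff:
  assumes I: "is_ideal I" and "f \<noteq> 0" "g \<noteq> 0" "g \<in> I"
  shows "spoly ord f g \<in> I \<longleftrightarrow>
    Poly_Mapping.single (mlcm (lm ord f) (lm ord g) - lm ord f) (inverse (lc ord f)) * f \<in> I"
proof -
  have "Poly_Mapping.single (mlcm (lm ord f) (lm ord g) - lm ord g) (inverse (lc ord g)) * g \<in> I"
    using ideal_mult_left[OF I \<open>g \<in> I\<close>] .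
  then show ?thesis
    using assms ideal_diff_iff[OF I] unfolding spoly_def Let_def by simp
qed

lemma spoly_mem_ideal_if_lm_mdvd:
  assumes I: "is_ideal I" and f: "f \<noteq> 0"
    and g: "g \<noteq> 0" "g \<in> I" and g': "g' \<noteq> 0" "g' \<in> I"
    and dvd: "mdvd (lm ord g') (lm ord g)" and "spoly ord f g' \<in> I"
  shows "spoly ord f g \<in> I"
proof -
  let ?L = "mlcm (lm ord f) (lm ord g)" and ?L' = "mlcm (lm ord f) (lm ord g')"
  have "Poly_Mapping.single (?L' - lm ord f) (inverse (lc ord f)) * f \<in> I"
    using \<open>spoly ord f g' \<in> I\<close> spoly_mem_ideal_iff[OF I f g'] by simp
  then have "Poly_Mapping.single (?L - ?L') 1 *
      (Poly_Mapping.single (?L' - lm ord f) (inverse (lc ord f)) * f) \<in> I"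
    by (rule ideal_mult_left[OF I])
  then have "Poly_Mapping.single (?L - lm ord f) (inverse (lc ord f)) * f \<in> I"
    by (simp add: mult.assoc[symmetric] mult_single mlcm_minus_add_mlcm_minus[OF dvd])
  then show ?thesis using spoly_mem_ideal_iff[OF I f g] by simp
qed

lemma spoly_mem_groebner_basis_if_S_nice:
  assumes "is_ideal E" "S_nice ord GJ E" "groebner_basis ord GE E" "f \<in> GJ" "g \<in> GE"
  shows "spoly ord f g \<in> E"
  using assms ideal_zero[of E] unfolding S_nice_def groebner_basis_def
  by (cases "g = 0") auto

lemma S_nice_if_spoly_mem_groebner_basis:
  assumes E: "is_ideal E" and GE: "groebner_basis ord GE E"
    and sp: "\<forall>f\<in>GJ. \<forall>g\<in>GE. spoly ord f g \<in> E"
  shows "S_nice ord GJ E"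
  unfolding S_nice_def
proof (intro ballI impI)
  fix f g assume f: "f \<in> GJ" and g: "g \<in> E" "g \<noteq> 0"
  show "spoly ord f g \<in> E"
  proof (cases "f = 0")
    case True
    then show ?thesis using ideal_zero[OF E] by simp
  next
    case False
    obtain g' where "g' \<in> GE" "g' \<noteq> 0" "mdvd (lm ord g') (lm ord g)"
      using GE g unfolding groebner_basis_def by blast
    moreover from \<open>g' \<in> GE\<close> have "g' \<in> E" using GE unfolding groebner_basis_def by blast
    ultimately show ?thesis
      using spoly_mem_ideal_if_lm_mdvd[OF E False g(2,1)] sp f by blast
  qed
qed

theorem mainTheorem15:
  fixes ord :: "('v::finite) monom \<Rightarrow> 'v monom \<Rightarrow> bool"
    and J E GJ :: "('v, 'k::field) mpoly set"
  assumes "monomial_order ord"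
    and "is_ideal J" and "is_ideal E"
    and "groebner_basis ord GJ J"
  shows "(S_nice ord GJ E
            \<longleftrightarrow> (\<forall>GE. groebner_basis ord GE E \<longrightarrow> (\<forall>f\<in>GJ. \<forall>g\<in>GE. spoly ord f g \<in> E)))
       \<and> ((\<forall>GE. groebner_basis ord GE E \<longrightarrow> (\<forall>f\<in>GJ. \<forall>g\<in>GE. spoly ord f g \<in> E))
            \<longleftrightarrow> (\<exists>GE. groebner_basis ord GE E \<and> (\<forall>f\<in>GJ. \<forall>g\<in>GE. spoly ord f g \<in> E)))"
proof -
  let ?b = "\<forall>GE. groebner_basis ord GE E \<longrightarrow> (\<forall>f\<in>GJ. \<forall>g\<in>GE. spoly ord f g \<in> E)"
  let ?c = "\<exists>GE. groebner_basis ord GE E \<and> (\<forall>f\<in>GJ. \<forall>g\<in>GE. spoly ord f g \<in> E)"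
  have a_b: "S_nice ord GJ E \<longrightarrow> ?b"
    using spoly_mem_groebner_basis_if_S_nice[OF \<open>is_ideal E\<close>] by blast
  have b_c: "?b \<longrightarrow> ?c"
    using groebner_basis_exists[of ord E] by blast
  have c_a: "?c \<longrightarrow> S_nice ord GJ E"
    using S_nice_if_spoly_mem_groebner_basis[OF \<open>is_ideal E\<close>] by blast
  from a_b b_c c_a show ?thesis by argo
qed

end
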